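(* Let $\phi_1,\dots,\phi_{n+m}$ be arbitrary functions of one variable and $\bar\beta=\{\beta_1,\dots,\beta_{n+m}\}$. Define $\Phi_{n+m}(\bar\beta)=\Delta_{n+m}(\bar\beta)\det_{n+m}\big[\phi_k(\beta_j)\big]_{j,k=1}^{n+m}$. Then $$\Phi_{n+m}(\bar\beta)=\sum \Delta_n(\bar\beta_{\rm I})\det_{k=1,\dots,n}\phi_k(\beta_{{\rm I}_j})\cdot\Delta_m(\bar\beta_{\rm II})\det_{k=1,\dots,m}\phi_{n+k}(\beta_{{\rm II}_j})\cdot g(\bar\beta_{\rm II},\bar\beta_{\rm I}),$$ where the sum runs over partitions $\bar\beta\Rightarrow\{\bar\beta_{\rm I},\bar\beta_{\rm II}\}$ with $\#\bar\beta_{\rm I}=n$, $\#\bar\beta_{\rm II}=m$, the elements of each subset being listed in increasing order of their original indices ($\beta_{{\rm I}_1},\beta_{{\rm I}_2},\dots$ and $\beta_{{\rm II}_1},\dots$).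
   Context: Fix $c\neq0$ and $g(u,v)=\frac{c}{u-v}$. For sets, $g(\bar u,\bar v)=\prod_{u_j\in\bar u}\prod_{v_k\in\bar v}g(u_j,v_k)$. For an ordered set $\bar v=\{v_1,\dots,v_p\}$, $\Delta_p(\bar v)=\prod_{j>k}g(v_j,v_k)$ (with $\Delta_0=1$). *)

theory Defs
  imports "HOL-Combinatorics.Permutations"
begin

definition gfun :: "'a::field \<Rightarrow> 'a \<Rightarrow> 'a \<Rightarrow> 'a" where
  "gfun c u v = c / (u - v)"

definition gset :: "'a::field \<Rightarrow> ('i \<Rightarrow> 'a) \<Rightarrow> 'i set \<Rightarrow> 'i set \<Rightarrow> 'a" where
  "gset c b U V = (\<Prod>u\<in>U. \<Prod>v\<in>V. gfun c (b u) (b v))"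

definition Delta :: "'a::field \<Rightarrow> nat \<Rightarrow> (nat \<Rightarrow> 'a) \<Rightarrow> 'a" where
  "Delta c p v = (\<Prod>(j,k)\<in>{(j,k). 1 \<le> k \<and> k < j \<and> j \<le> p}. gfun c (v j) (v k))"

definition detn :: "nat \<Rightarrow> (nat \<Rightarrow> nat \<Rightarrow> 'a::comm_ring_1) \<Rightarrow> 'a" where
  "detn p A = (\<Sum>\<sigma> | \<sigma> permutes {1..p}. of_int (sign \<sigma>) * (\<Prod>j\<in>{1..p}. A j (\<sigma> j)))"

definition idx :: "nat set \<Rightarrow> nat \<Rightarrow> nat" where
  "idx S j = sorted_list_of_set S ! (j - 1)"

definition Phi :: "'a::field \<Rightarrow> nat \<Rightarrow> (nat \<Rightarrow> 'a \<Rightarrow> 'a) \<Rightarrow> (nat \<Rightarrow> 'a) \<Rightarrow> 'a" where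
  "Phi c N \<phi> \<beta> = Delta c N \<beta> * detn N (\<lambda>j k. \<phi> k (\<beta> j))"

end

theory Submission
  imports Defs
begin

text \<open>
  Both factors of \<open>\<Phi>\<close> pick up the sign of a permutation when the \<open>\<beta>\<close>'s are reordered:
  the determinant by the Leibniz formula, and \<open>\<Delta>\<close> because \<open>g\<close> is antisymmetric, so that
  \<open>\<Delta>(\<beta> \<circ> \<sigma>) = sgn \<sigma> \<cdot> \<Delta>(\<beta>)\<close>. For a subset \<open>I\<close> of size \<open>n\<close> let \<open>p\<^sub>I\<close> list \<open>I\<close>
  and then its complement \<open>II\<close>, each in increasing order. Reordering by \<open>p\<^sub>I\<close> splits
  \<open>\<Delta>\<^sub>n\<^sub>+\<^sub>m\<close> into \<open>\<Delta>\<^sub>n(\<beta>\<^sub>I) \<Delta>\<^sub>m(\<beta>\<^sub>I\<^sub>I) g(\<beta>\<^sub>I\<^sub>I, \<beta>\<^sub>I)\<close>, while the Laplace expansion of the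
  determinant along its first \<open>n\<close> columns is \<open>\<Sum>\<^sub>I sgn p\<^sub>I \<cdot> det\<^sub>n \<cdot> det\<^sub>m\<close>; the two signs cancel.
  The Laplace expansion comes from writing each permutation of \<open>{1..n+m}\<close> uniquely as
  \<open>(\<tau>\<^sub>1 \<oplus> \<tau>\<^sub>2) \<circ> p\<^sub>I\<^sup>-\<^sup>1\<close>, where \<open>I\<close> is the set of rows it sends to the first \<open>n\<close> columns.
\<close>

definition lower_pairs :: "'a::linorder set \<Rightarrow> ('a \<times> 'a) set" where
  "lower_pairs S = {(j, k). j \<in> S \<and> k \<in> S \<and> k < j}"

lemma finite_lower_pairs: "finite S \<Longrightarrow> finite (lower_pairs S)"
  unfolding lower_pairs_def by (rule finite_subset[of _ "S \<times> S"]) auto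

lemma prod_lower_pairs_permute_symmetric:
  fixes F :: "'a::linorder \<Rightarrow> 'a \<Rightarrow> 'b::comm_monoid_mult"
  assumes \<sigma>: "\<sigma> permutes S"
    and sym: "\<And>a b. a \<in> S \<Longrightarrow> b \<in> S \<Longrightarrow> F a b = F b a"
  shows "(\<Prod>(j, k)\<in>lower_pairs S. F (\<sigma> j) (\<sigma> k)) = (\<Prod>(j, k)\<in>lower_pairs S. F j k)"
proof -
  define sort2 where "sort2 f x = (max (f (fst x)) (f (snd x)), min (f (fst x)) (f (snd x)))"
    for f :: "'a \<Rightarrow> 'a" and x
  have sort2: "sort2 g (sort2 f x) = x" "sort2 f x \<in> lower_pairs S"
    if "x \<in> lower_pairs S" "f permutes S" "g \<circ> f = id" for f g x
  proof -
    from that obtain j k where x: "x = (j, k)" "j \<in> S" "k \<in> S" "k < j"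
      by (auto simp: lower_pairs_def)
    have "f j \<noteq> f k" "\<And>y. g (f y) = y"
      using x \<open>f permutes S\<close> \<open>g \<circ> f = id\<close>
      by (metis permutes_inj inj_eq less_irrefl, metis comp_apply id_apply)
    then show "sort2 g (sort2 f x) = x" "sort2 f x \<in> lower_pairs S"
      using x permutes_in_image[OF \<open>f permutes S\<close>]
      by (auto simp: sort2_def max_def min_def lower_pairs_def)
  qed
  have inv\<sigma>: "inv \<sigma> permutes S" "inv \<sigma> \<circ> \<sigma> = id" "\<sigma> \<circ> inv \<sigma> = id"
    using \<sigma> permutes_inv permutes_inv_o by blast+
  show ?thesis
  proof (rule prod.reindex_bij_witness[where j = "sort2 \<sigma>" and i = "sort2 (inv \<sigma>)"])
    fix x assume x: "x \<in> lower_pairs S"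
    show "sort2 (inv \<sigma>) (sort2 \<sigma> x) = x" "sort2 \<sigma> x \<in> lower_pairs S"
      using sort2[OF x \<sigma> inv\<sigma>(2)] by simp_all
    show "sort2 \<sigma> (sort2 (inv \<sigma>) x) = x" "sort2 (inv \<sigma>) x \<in> lower_pairs S"
      using sort2[OF x inv\<sigma>(1,3)] by simp_all
    show "(case sort2 \<sigma> x of (j, k) \<Rightarrow> F j k) = (case x of (j, k) \<Rightarrow> F (\<sigma> j) (\<sigma> k))"
      using x sym permutes_in_image[OF \<sigma>]
      by (auto simp: sort2_def max_def min_def lower_pairs_def)
  qed
qed

definition pair_sign :: "'a::linorder \<Rightarrow> 'a \<Rightarrow> int" where
  "pair_sign a b = (if b < a then 1 else -1)"

definition inversion_sign :: "'a::linorder set \<Rightarrow> ('a \<Rightarrow> 'a) \<Rightarrow> int" where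
  "inversion_sign S \<sigma> = (\<Prod>(j, k)\<in>lower_pairs S. pair_sign (\<sigma> j) (\<sigma> k))"

lemma pair_sign_square: "pair_sign a b * pair_sign a b = 1"
  by (simp add: pair_sign_def)

lemma pair_sign_swap: "a \<noteq> b \<Longrightarrow> pair_sign a b = - pair_sign b a"
  by (cases a b rule: linorder_cases) (auto simp: pair_sign_def)

lemma prod_lower_pairs_permute_antisymmetric:
  fixes G :: "'a::linorder \<Rightarrow> 'a \<Rightarrow> 'b::comm_ring_1"
  assumes \<sigma>: "\<sigma> permutes S"
    and antisym: "\<And>a b. a \<in> S \<Longrightarrow> b \<in> S \<Longrightarrow> a \<noteq> b \<Longrightarrow> G a b = - G b a"
  shows "(\<Prod>(j, k)\<in>lower_pairs S. G (\<sigma> j) (\<sigma> k))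
    = of_int (inversion_sign S \<sigma>) * (\<Prod>(j, k)\<in>lower_pairs S. G j k)"
proof -
  \<comment> \<open>Multiplying by the sign of each pair makes the factors symmetric.\<close>
  define H where "H a b = of_int (pair_sign a b) * G a b" for a b
  have G_H: "G a b = of_int (pair_sign a b) * H a b" for a b
    unfolding H_def mult.assoc[symmetric] of_int_mult[symmetric] pair_sign_square by simp
  have "(\<Prod>(j, k)\<in>lower_pairs S. G (\<sigma> j) (\<sigma> k))
      = of_int (inversion_sign S \<sigma>) * (\<Prod>(j, k)\<in>lower_pairs S. H (\<sigma> j) (\<sigma> k))"
    unfolding inversion_sign_def G_H by (simp add: case_prod_unfold prod.distrib of_int_prod)
  also have "(\<Prod>(j, k)\<in>lower_pairs S. H (\<sigma> j) (\<sigma> k)) = (\<Prod>(j, k)\<in>lower_pairs S. H j k)"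
  proof (rule prod_lower_pairs_permute_symmetric[OF \<sigma>])
    fix a b assume "a \<in> S" "b \<in> S"
    then show "H a b = H b a"
      using antisym[of a b] pair_sign_swap[of a b] by (cases "a = b") (simp_all add: H_def)
  qed
  also have "\<dots> = (\<Prod>(j, k)\<in>lower_pairs S. G j k)"
    by (rule prod.cong) (auto simp: H_def pair_sign_def lower_pairs_def)
  finally show ?thesis .
qed

lemma inversion_sign_compose:
  assumes \<pi>: "\<pi> permutes S" and \<sigma>: "\<sigma> permutes S"
  shows "inversion_sign S (\<pi> \<circ> \<sigma>) = inversion_sign S \<pi> * inversion_sign S \<sigma>"
proof -
  have "(\<Prod>(j, k)\<in>lower_pairs S. pair_sign (\<pi> (\<sigma> j)) (\<pi> (\<sigma> k)))
      = of_int (inversion_sign S \<sigma>) * (\<Prod>(j, k)\<in>lower_pairs S. pair_sign (\<pi> j) (\<pi> k))"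
  proof (rule prod_lower_pairs_permute_antisymmetric[OF \<sigma>])
    fix a b assume "a \<in> S" "b \<in> S" "a \<noteq> b"
    then have "\<pi> a \<noteq> \<pi> b" using permutes_inj[OF \<pi>] by (meson inj_eq)
    then show "pair_sign (\<pi> a) (\<pi> b) = - pair_sign (\<pi> b) (\<pi> a)" by (rule pair_sign_swap)
  qed
  then show ?thesis by (simp add: inversion_sign_def)
qed

lemma inversion_sign_transpose_Suc:
  fixes a :: nat
  assumes "a \<in> S" "Suc a \<in> S" "finite S"
  shows "inversion_sign S (transpose a (Suc a)) = -1"
proof -
  have "inversion_sign S (transpose a (Suc a)) = (\<Prod>x\<in>lower_pairs S. if x = (Suc a, a) then -1 else 1)"
    unfolding inversion_sign_def
    by (rule prod.cong) (auto simp: lower_pairs_def pair_sign_def transpose_def split: if_splits)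
  also have "\<dots> = -1"
  proof -
    have "(Suc a, a) \<in> lower_pairs S" using assms by (simp add: lower_pairs_def)
    then show ?thesis using assms by (simp add: finite_lower_pairs)
  qed
  finally show ?thesis .
qed

lemma inversion_sign_transpose:
  fixes a b :: nat
  assumes "a < b" "{a..b} \<subseteq> S" "finite S"
  shows "inversion_sign S (transpose a b) = -1"
  using assms
proof (induction "b - a" arbitrary: a)
  case (Suc d)
  show ?case
  proof (cases "b = Suc a")
    case True
    have "a \<in> S" "Suc a \<in> S" using Suc.prems by auto
    with True Suc.prems(3) show ?thesis by (simp add: inversion_sign_transpose_Suc)
  next
    case False
    \<comment> \<open>Conjugate the transposition of \<open>a + 1\<close> and \<open>b\<close> by an adjacent one.\<close>
    define s where "s = transpose a (Suc a)"
    have "a \<in> S" "Suc a \<in> S" using Suc.prems by auto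
    then have s: "s permutes S" "inversion_sign S s = -1"
      using Suc.prems(3) by (simp_all add: s_def permutes_swap_id inversion_sign_transpose_Suc)
    have "Suc a < b" using False Suc.prems(1) by simp
    have t: "transpose (Suc a) b permutes S" "inversion_sign S (transpose (Suc a) b) = -1"
    proof -
      show "transpose (Suc a) b permutes S"
        using \<open>Suc a \<in> S\<close> Suc.prems(1,2) by (intro permutes_swap_id) auto
      show "inversion_sign S (transpose (Suc a) b) = -1"
        using \<open>Suc a < b\<close> Suc.hyps(2) Suc.prems(2,3) by (intro Suc.hyps(1)) auto
    qed
    have "transpose a b = s \<circ> transpose (Suc a) b \<circ> s"
      using False Suc.prems by (auto simp: fun_eq_iff transpose_def s_def)
    then show ?thesis
      using inversion_sign_compose[OF permutes_compose[OF t(1) s(1)] s(1)]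
        inversion_sign_compose[OF s(1) t(1)] s t by simp
  qed
qed simp

lemma inversion_sign_eq_sign:
  assumes "\<sigma> permutes {l..u::nat}"
  shows "inversion_sign {l..u} \<sigma> = sign \<sigma>"
  using assms finite_atLeastAtMost
proof (induction \<sigma> rule: permutes_induct)
  case id
  show ?case by (simp add: inversion_sign_def pair_sign_def lower_pairs_def prod.neutral)
next
  case (swap a b \<sigma>)
  have t: "transpose a b permutes {l..u}" using swap by (intro permutes_swap_id)
  have "inversion_sign {l..u} (transpose a b) = -1"
    using swap inversion_sign_transpose[of a b] inversion_sign_transpose[of b a]
    by (cases "a < b") (auto simp: transpose_commute)
  moreover have "sign (transpose a b \<circ> \<sigma>) = - sign \<sigma>"
    using permutes_imp_permutation[OF finite_atLeastAtMost swap(4)] swap(3)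
    by (simp add: sign_compose sign_swap_id permutation_swap_id)
  ultimately have "inversion_sign {l..u} (transpose a b \<circ> \<sigma>) = sign (transpose a b \<circ> \<sigma>)"
    using swap inversion_sign_compose[OF t swap(4)] by simp
  then show ?case by (simp add: comp_def)
qed

lemma Delta_eq_prod_lower_pairs:
  "Delta c p v = (\<Prod>(j, k)\<in>lower_pairs {1..p}. gfun c (v j) (v k))"
  unfolding Delta_def lower_pairs_def by (rule prod.cong) auto

lemma gfun_swap: "gfun c u v = - gfun c v u"
  unfolding gfun_def by (metis divide_minus_right minus_diff_eq)

lemma Delta_permute:
  assumes \<sigma>: "\<sigma> permutes {1..p}"
  shows "Delta c p (v \<circ> \<sigma>) = of_int (sign \<sigma>) * Delta c p v"
  unfolding Delta_eq_prod_lower_pairs inversion_sign_eq_sign[OF \<sigma>, symmetric] comp_apply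
  by (rule prod_lower_pairs_permute_antisymmetric[OF \<sigma>]) (rule gfun_swap)

lemma Delta_cong: "(\<And>j. j \<in> {1..p} \<Longrightarrow> v j = w j) \<Longrightarrow> Delta c p v = Delta c p w"
  unfolding Delta_def by (rule prod.cong) auto

lemma Delta_0: "Delta c 0 v = 1"
  unfolding Delta_def by (rule prod.neutral) auto

lemma Delta_Suc:
  "Delta c (Suc p) v = Delta c p v * (\<Prod>k\<in>{1..p}. gfun c (v (Suc p)) (v k))"
proof -
  have pairs: "lower_pairs {1..Suc p} = lower_pairs {1..p} \<union> Pair (Suc p) ` {1..p}"
    by (auto simp: lower_pairs_def)
  have "Delta c (Suc p) v = Delta c p v * (\<Prod>(j, k)\<in>Pair (Suc p) ` {1..p}. gfun c (v j) (v k))"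
    unfolding Delta_eq_prod_lower_pairs pairs
    by (rule prod.union_disjoint) (simp_all add: finite_lower_pairs, auto simp: lower_pairs_def)
  also have "(\<Prod>(j, k)\<in>Pair (Suc p) ` {1..p}. gfun c (v j) (v k)) = (\<Prod>k\<in>{1..p}. gfun c (v (Suc p)) (v k))"
    by (subst prod.reindex) (auto simp: inj_on_def)
  finally show ?thesis .
qed

lemma Delta_add:
  "Delta c (n + m) v = Delta c n v * Delta c m (\<lambda>j. v (n + j)) *
     (\<Prod>j\<in>{1..m}. \<Prod>k\<in>{1..n}. gfun c (v (n + j)) (v k))"
proof (induction m)
  case (Suc m)
  let ?g = "\<lambda>k. gfun c (v (n + Suc m)) (v k)"
  have "{1..n + m} = {1..n} \<union> (+) n ` {1..m}" by (auto simp: image_iff)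
  then have "prod ?g {1..n + m} = prod ?g {1..n} * prod ?g ((+) n ` {1..m})"
    by (simp only:) (rule prod.union_disjoint, auto)
  also have "prod ?g ((+) n ` {1..m}) = (\<Prod>k\<in>{1..m}. ?g (n + k))"
    by (subst prod.reindex) auto
  finally show ?case
    using Suc.IH Delta_Suc[of c "n + m" v] Delta_Suc[of c m "\<lambda>j. v (n + j)"]
    by (simp add: ac_simps)
qed (simp add: Delta_0)

lemma bij_betw_idx: "finite X \<Longrightarrow> bij_betw (idx X) {1..card X} X"
proof -
  assume "finite X"
  then have "bij_betw ((!) (sorted_list_of_set X)) {..<card X} X"
    by (intro bij_betw_nth) simp_all
  moreover have "bij_betw (\<lambda>j. j - 1) {1..card X} {..<card X}"
    by (rule bij_betw_byWitness[where f' = Suc]) auto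
  ultimately show ?thesis
    unfolding idx_def[abs_def] using bij_betw_trans by (fastforce simp: comp_def)
qed

definition split_perm :: "nat \<Rightarrow> nat \<Rightarrow> nat set \<Rightarrow> nat \<Rightarrow> nat" where
  "split_perm n m I j =
    (if j \<in> {1..n} then idx I j else if j \<in> {n+1..n+m} then idx ({1..n+m} - I) (j - n) else j)"

lemma split_perm_low: "j \<in> {1..n} \<Longrightarrow> split_perm n m I j = idx I j"
  by (simp add: split_perm_def)

lemma split_perm_high: "j \<in> {1..m} \<Longrightarrow> split_perm n m I (n + j) = idx ({1..n+m} - I) j"
  by (simp add: split_perm_def)

lemma bij_betw_split_perm:
  assumes I: "I \<subseteq> {1..n+m}" "card I = n"
  shows "bij_betw (split_perm n m I) {1..n} I"
    and "bij_betw (split_perm n m I) {n+1..n+m} ({1..n+m} - I)"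
proof -
  have "finite I" using I(1) finite_subset by blast
  then have "bij_betw (idx I) {1..n} I" using bij_betw_idx[of I] I(2) by simp
  then show "bij_betw (split_perm n m I) {1..n} I"
    by (rule bij_betw_cong[THEN iffD2, rotated]) (simp add: split_perm_low)
  have "card ({1..n+m} - I) = m" using I \<open>finite I\<close> by (simp add: card_Diff_subset)
  then have "bij_betw (idx ({1..n+m} - I)) {1..m} ({1..n+m} - I)"
    using bij_betw_idx[of "{1..n+m} - I"] by simp
  moreover have "bij_betw (\<lambda>j. j - n) {n+1..n+m} {1..m}"
    by (rule bij_betw_byWitness[where f' = "\<lambda>j. j + n"]) auto
  ultimately have "bij_betw (idx ({1..n+m} - I) \<circ> (\<lambda>j. j - n)) {n+1..n+m} ({1..n+m} - I)"
    by (rule bij_betw_trans[rotated])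
  then show "bij_betw (split_perm n m I) {n+1..n+m} ({1..n+m} - I)"
    by (rule bij_betw_cong[THEN iffD2, rotated]) (auto simp: split_perm_def)
qed

lemma split_perm_permutes:
  assumes "I \<subseteq> {1..n+m}" "card I = n"
  shows "split_perm n m I permutes {1..n+m}"
proof (rule bij_imp_permutes)
  have "bij_betw (split_perm n m I) ({1..n} \<union> {n+1..n+m}) (I \<union> ({1..n+m} - I))"
    using bij_betw_split_perm[OF assms] by (intro bij_betw_combine) auto
  moreover have "{1..n} \<union> {n+1..n+m} = {1..n+m}" "I \<union> ({1..n+m} - I) = {1..n+m}"
    using assms(1) by auto
  ultimately show "bij_betw (split_perm n m I) {1..n+m} {1..n+m}" by simp
qed (auto simp: split_perm_def)

definition block_perm :: "nat \<Rightarrow> nat \<Rightarrow> (nat \<Rightarrow> nat) \<Rightarrow> (nat \<Rightarrow> nat) \<Rightarrow> nat \<Rightarrow> nat" where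
  "block_perm n m \<tau>\<^sub>1 \<tau>\<^sub>2 = \<tau>\<^sub>1 \<circ> map_permutation {1..m} ((+) n) \<tau>\<^sub>2"

lemma bij_betw_add_interval: "bij_betw ((+) n) {1..m} {n+1..n+m::nat}"
  by (rule bij_betw_byWitness[where f' = "\<lambda>j. j - n"]) auto

lemma block_perm_low:
  assumes "\<tau>\<^sub>1 permutes {1..n}" "j \<in> {1..n}"
  shows "block_perm n m \<tau>\<^sub>1 \<tau>\<^sub>2 j = \<tau>\<^sub>1 j"
  using assms(2) by (auto simp: block_perm_def map_permutation_def)

lemma block_perm_high:
  assumes "\<tau>\<^sub>1 permutes {1..n}" "\<tau>\<^sub>2 permutes {1..m}" "j \<in> {1..m}"
  shows "block_perm n m \<tau>\<^sub>1 \<tau>\<^sub>2 (n + j) = n + \<tau>\<^sub>2 j"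
proof -
  have "\<tau>\<^sub>2 j \<in> {1..m}" using assms(3) by (simp only: permutes_in_image[OF assms(2)])
  then have "\<tau>\<^sub>1 (n + \<tau>\<^sub>2 j) = n + \<tau>\<^sub>2 j" using assms(1) by (intro permutes_not_in) auto
  with assms(3) show ?thesis by (simp add: block_perm_def map_permutation_apply)
qed

lemma block_perm_permutes:
  assumes "\<tau>\<^sub>1 permutes {1..n}" "\<tau>\<^sub>2 permutes {1..m}"
  shows "block_perm n m \<tau>\<^sub>1 \<tau>\<^sub>2 permutes {1..n+m}"
proof -
  have "map_permutation {1..m} ((+) n) \<tau>\<^sub>2 permutes {1..n+m}"
    using map_permutation_permutes[OF bij_betw_add_interval assms(2)] by (rule permutes_subset) auto
  moreover have "\<tau>\<^sub>1 permutes {1..n+m}" using assms(1) by (rule permutes_subset) auto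
  ultimately show ?thesis unfolding block_perm_def by (rule permutes_compose)
qed

lemma sign_block_perm:
  assumes "\<tau>\<^sub>1 permutes {1..n}" "\<tau>\<^sub>2 permutes {1..m}"
  shows "sign (block_perm n m \<tau>\<^sub>1 \<tau>\<^sub>2) = sign \<tau>\<^sub>1 * sign \<tau>\<^sub>2"
proof -
  have "map_permutation {1..m} ((+) n) \<tau>\<^sub>2 permutes {n+1..n+m}"
    using map_permutation_permutes[OF bij_betw_add_interval assms(2)] by simp
  then have "permutation (map_permutation {1..m} ((+) n) \<tau>\<^sub>2)"
    by (rule permutes_imp_permutation[rotated]) simp
  moreover have "permutation \<tau>\<^sub>1" using assms(1) by (rule permutes_imp_permutation[rotated]) simp
  ultimately show ?thesis
    using sign_map_permutation[OF bij_betw_imp_inj_on[OF bij_betw_add_interval] assms(2)]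
    by (simp add: block_perm_def sign_compose)
qed

lemma restrict_id_compose_disjoint:
  assumes p: "p permutes A" and q: "q permutes B" and "A \<inter> B = {}"
  shows "restrict_id (p \<circ> q) A = p" "restrict_id (p \<circ> q) B = q"
proof -
  have "q x = x" if "x \<in> A" for x
    using that assms(3) by (intro permutes_not_in[OF q]) auto
  moreover have "p (q x) = q x" if "x \<in> B" for x
    using that assms(3) permutes_in_image[OF q] by (intro permutes_not_in[OF p]) auto
  ultimately show "restrict_id (p \<circ> q) A = p" "restrict_id (p \<circ> q) B = q"
    using permutes_not_in[OF p] permutes_not_in[OF q] by (auto simp: fun_eq_iff restrict_id_def)
qed

lemma permutes_decompose_disjoint:
  assumes \<rho>: "\<rho> permutes A \<union> B" and A: "\<rho> ` A = A" and "A \<inter> B = {}"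
  shows "restrict_id \<rho> A permutes A" "restrict_id \<rho> B permutes B"
    and "restrict_id \<rho> A \<circ> restrict_id \<rho> B = \<rho>"
proof -
  have inj: "inj_on \<rho> X" for X using permutes_inj[OF \<rho>] by (rule inj_on_subset) simp
  have "\<rho> ` ((A \<union> B) - A) = \<rho> ` (A \<union> B) - \<rho> ` A"
    by (rule image_set_diff[OF permutes_inj[OF \<rho>]])
  moreover have "(A \<union> B) - A = B" using assms(3) by auto
  ultimately have B: "\<rho> ` B = B" using A permutes_image[OF \<rho>] by simp
  show "restrict_id \<rho> A permutes A" "restrict_id \<rho> B permutes B"
    using A B inj by (simp_all add: permutes_restrict_id bij_betw_def)
  show "restrict_id \<rho> A \<circ> restrict_id \<rho> B = \<rho>"
    using B assms(3) permutes_not_in[OF \<rho>] by (auto simp: fun_eq_iff restrict_id_def)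
qed

lemma restrict_id_block_perm:
  assumes \<tau>: "\<tau>\<^sub>1 permutes {1..n}" "\<tau>\<^sub>2 permutes {1..m}"
  shows "restrict_id (block_perm n m \<tau>\<^sub>1 \<tau>\<^sub>2) {1..n} = \<tau>\<^sub>1"
    and "map_permutation {n+1..n+m} (\<lambda>j. j - n)
           (restrict_id (block_perm n m \<tau>\<^sub>1 \<tau>\<^sub>2) {n+1..n+m}) = \<tau>\<^sub>2"
proof -
  have shift: "map_permutation {1..m} ((+) n) \<tau>\<^sub>2 permutes {n+1..n+m}"
    using map_permutation_permutes[OF bij_betw_add_interval \<tau>(2)] by simp
  have disjoint: "{1..n} \<inter> {n+1..n+m} = {}" by auto
  show "restrict_id (block_perm n m \<tau>\<^sub>1 \<tau>\<^sub>2) {1..n} = \<tau>\<^sub>1"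
    unfolding block_perm_def by (rule restrict_id_compose_disjoint(1)[OF \<tau>(1) shift disjoint])
  show "map_permutation {n+1..n+m} (\<lambda>j. j - n)
      (restrict_id (block_perm n m \<tau>\<^sub>1 \<tau>\<^sub>2) {n+1..n+m}) = \<tau>\<^sub>2"
    unfolding block_perm_def restrict_id_compose_disjoint(2)[OF \<tau>(1) shift disjoint]
    by (rule map_permutation_compose_inv[OF bij_betw_add_interval \<tau>(2)]) simp
qed

lemma block_perm_restrict_id:
  assumes \<rho>: "\<rho> permutes {1..n+m}" "\<rho> ` {1..n} = {1..n}"
  defines "\<tau>\<^sub>2 \<equiv> map_permutation {n+1..n+m} (\<lambda>j. j - n) (restrict_id \<rho> {n+1..n+m})"
  shows "restrict_id \<rho> {1..n} permutes {1..n}" "\<tau>\<^sub>2 permutes {1..m}"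
    and "block_perm n m (restrict_id \<rho> {1..n}) \<tau>\<^sub>2 = \<rho>"
proof -
  have "{1..n} \<union> {n+1..n+m} = {1..n+m}" "{1..n} \<inter> {n+1..n+m} = {}" by auto
  note dec = permutes_decompose_disjoint[of \<rho> "{1..n}" "{n+1..n+m}", unfolded this(1), OF \<rho> this(2)]
  have unshift: "bij_betw (\<lambda>j. j - n) {n+1..n+m} {1..m}"
    by (rule bij_betw_byWitness[where f' = "(+) n"]) auto
  show "restrict_id \<rho> {1..n} permutes {1..n}" by (fact dec(1))
  show "\<tau>\<^sub>2 permutes {1..m}"
    unfolding \<tau>\<^sub>2_def by (rule map_permutation_permutes[OF unshift dec(2)])
  have "map_permutation {1..m} ((+) n) \<tau>\<^sub>2 = restrict_id \<rho> {n+1..n+m}"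
    unfolding \<tau>\<^sub>2_def by (rule map_permutation_compose_inv[OF unshift dec(2)]) simp
  then show "block_perm n m (restrict_id \<rho> {1..n}) \<tau>\<^sub>2 = \<rho>"
    unfolding block_perm_def by (simp only: dec(3))
qed

lemma block_perm_image_low:
  assumes "\<tau>\<^sub>1 permutes {1..n}"
  shows "block_perm n m \<tau>\<^sub>1 \<tau>\<^sub>2 ` {1..n} = {1..n}"
proof -
  have "block_perm n m \<tau>\<^sub>1 \<tau>\<^sub>2 ` {1..n} = \<tau>\<^sub>1 ` {1..n}" by (simp add: block_perm_low[OF assms])
  then show ?thesis using permutes_image[OF assms] by simp
qed

lemma bij_betw_block_perm:
  "bij_betw (\<lambda>(\<tau>\<^sub>1, \<tau>\<^sub>2). block_perm n m \<tau>\<^sub>1 \<tau>\<^sub>2)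
     ({\<tau>. \<tau> permutes {1..n}} \<times> {\<tau>. \<tau> permutes {1..m}})
     {\<rho>. \<rho> permutes {1..n+m} \<and> \<rho> ` {1..n} = {1..n}}"
  by (rule bij_betw_byWitness[where f' = "\<lambda>\<rho>. (restrict_id \<rho> {1..n},
        map_permutation {n+1..n+m} (\<lambda>j. j - n) (restrict_id \<rho> {n+1..n+m}))"])
    (simp_all del: One_nat_def add: restrict_id_block_perm block_perm_restrict_id[of _ n m]
      block_perm_image_low block_perm_permutes image_subset_iff)

lemma sum_block_perm:
  "(\<Sum>\<rho> | \<rho> permutes {1..n+m} \<and> \<rho> ` {1..n} = {1..n}. F \<rho>)
    = (\<Sum>\<tau>\<^sub>1 | \<tau>\<^sub>1 permutes {1..n}. \<Sum>\<tau>\<^sub>2 | \<tau>\<^sub>2 permutes {1..m}.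
         F (block_perm n m \<tau>\<^sub>1 \<tau>\<^sub>2))"
  unfolding sum.reindex_bij_betw[OF bij_betw_block_perm, of F, symmetric] sum.cartesian_product
  by (simp add: case_prod_unfold)

lemma permutes_image_preimage:
  assumes \<sigma>: "\<sigma> permutes S" and "L \<subseteq> S"
  shows "\<sigma> ` {j \<in> S. \<sigma> j \<in> L} = L"
proof
  show "\<sigma> ` {j \<in> S. \<sigma> j \<in> L} \<subseteq> L" by auto
  show "L \<subseteq> \<sigma> ` {j \<in> S. \<sigma> j \<in> L}"
  proof
    fix y assume "y \<in> L"
    then have "inv \<sigma> y \<in> {j \<in> S. \<sigma> j \<in> L}"
      using assms(2) permutes_in_image[OF permutes_inv[OF \<sigma>]] permutes_inverses(1)[OF \<sigma>] by auto
    then show "y \<in> \<sigma> ` {j \<in> S. \<sigma> j \<in> L}"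
      using permutes_inverses(1)[OF \<sigma>] by (metis image_eqI)
  qed
qed

lemma card_permutes_preimage:
  assumes \<sigma>: "\<sigma> permutes S" and "L \<subseteq> S"
  shows "card {j \<in> S. \<sigma> j \<in> L} = card L"
proof -
  have "inj_on \<sigma> {j \<in> S. \<sigma> j \<in> L}" using permutes_inj[OF \<sigma>] by (rule inj_on_subset) simp
  then show ?thesis using permutes_image_preimage[OF assms] card_image by fastforce
qed

lemma sum_permutes_fibre:
  assumes I: "I \<subseteq> {1..n+m}" "card I = n"
  shows "(\<Sum>\<sigma> | \<sigma> permutes {1..n+m} \<and> {j \<in> {1..n+m}. \<sigma> j \<in> {1..n}} = I. F \<sigma>)
    = (\<Sum>\<rho> | \<rho> permutes {1..n+m} \<and> \<rho> ` {1..n} = {1..n}. F (\<rho> \<circ> inv (split_perm n m I)))"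
proof -
  let ?S = "{1..n+m}" and ?L = "{1..n}" and ?p = "split_perm n m I"
  have p: "?p permutes ?S" by (rule split_perm_permutes[OF I])
  have pL: "?p ` ?L = I" using bij_betw_split_perm(1)[OF I] by (simp add: bij_betw_def)
  show ?thesis
  proof (rule sum.reindex_bij_witness[where i = "\<lambda>\<sigma>. \<sigma> \<circ> ?p" and j = "\<lambda>\<rho>. \<rho> \<circ> inv ?p",
        symmetric])
    fix \<rho> assume "\<rho> \<in> {\<rho>. \<rho> permutes ?S \<and> \<rho> ` ?L = ?L}"
    then have \<rho>: "\<rho> permutes ?S" "\<rho> ` ?L = ?L" by auto
    show "\<rho> \<circ> inv ?p \<circ> ?p = \<rho>" by (simp add: o_assoc[symmetric] permutes_inv_o(2)[OF p])
    have "\<rho> (inv ?p x) \<in> ?L \<longleftrightarrow> inv ?p x \<in> ?L" for x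
      using inj_image_mem_iff[OF permutes_inj[OF \<rho>(1)], of "inv ?p x" ?L] \<rho>(2) by simp
    moreover have "inv ?p x \<in> ?L \<longleftrightarrow> x \<in> I" for x
      using inj_image_mem_iff[OF permutes_inj[OF p], of "inv ?p x" ?L] pL
      by (simp add: permutes_inverses(1)[OF p])
    ultimately have "\<rho> (inv ?p x) \<in> ?L \<longleftrightarrow> x \<in> I" for x by blast
    then show "\<rho> \<circ> inv ?p \<in> {\<sigma>. \<sigma> permutes ?S \<and> {j \<in> ?S. \<sigma> j \<in> ?L} = I}"
      using permutes_compose[OF permutes_inv[OF p] \<rho>(1)] I(1) by auto
  next
    fix \<sigma> assume "\<sigma> \<in> {\<sigma>. \<sigma> permutes ?S \<and> {j \<in> ?S. \<sigma> j \<in> ?L} = I}"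
    then have \<sigma>: "\<sigma> permutes ?S" "{j \<in> ?S. \<sigma> j \<in> ?L} = I" by auto
    show "\<sigma> \<circ> ?p \<circ> inv ?p = \<sigma>" by (simp add: o_assoc[symmetric] permutes_inv_o(1)[OF p])
    have "\<sigma> ` I = ?L"
      unfolding \<sigma>(2)[symmetric] by (rule permutes_image_preimage[OF \<sigma>(1)]) simp
    then have "(\<sigma> \<circ> ?p) ` ?L = ?L" using pL by (simp only: image_comp[symmetric])
    then show "\<sigma> \<circ> ?p \<in> {\<rho>. \<rho> permutes ?S \<and> \<rho> ` ?L = ?L}"
      using permutes_compose[OF p \<sigma>(1)] by simp
  qed simp
qed

lemma sum_permutes_split:
  "(\<Sum>\<sigma> | \<sigma> permutes {1..n+m}. F \<sigma>)
    = (\<Sum>I | I \<subseteq> {1..n+m} \<and> card I = n.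
         \<Sum>\<rho> | \<rho> permutes {1..n+m} \<and> \<rho> ` {1..n} = {1..n}. F (\<rho> \<circ> inv (split_perm n m I)))"
proof -
  let ?S = "{1..n+m}" and ?\<I> = "{I. I \<subseteq> {1..n+m} \<and> card I = n}"
  let ?rows = "\<lambda>\<sigma>. {j \<in> ?S. \<sigma> j \<in> {1..n}}"
  have "finite ?\<I>" by (rule finite_subset[of _ "Pow ?S"]) auto
  moreover have "?rows ` {\<sigma>. \<sigma> permutes ?S} \<subseteq> ?\<I>"
    using card_permutes_preimage[of _ ?S "{1..n}"] by auto
  ultimately have "(\<Sum>\<sigma> | \<sigma> permutes ?S. F \<sigma>)
      = (\<Sum>I\<in>?\<I>. \<Sum>\<sigma> | \<sigma> permutes ?S \<and> ?rows \<sigma> = I. F \<sigma>)"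
    using sum.group[of "{\<sigma>. \<sigma> permutes ?S}" ?\<I> ?rows F] by (simp add: finite_permutations)
  also have "\<dots> = (\<Sum>I\<in>?\<I>. \<Sum>\<rho> | \<rho> permutes ?S \<and> \<rho> ` {1..n} = {1..n}.
      F (\<rho> \<circ> inv (split_perm n m I)))"
    by (rule sum.cong[OF refl], rule sum_permutes_fibre) auto
  finally show ?thesis .
qed

lemma prod_block_perm_split_perm:
  assumes I: "I \<subseteq> {1..n+m}" "card I = n"
    and \<tau>: "\<tau>\<^sub>1 permutes {1..n}" "\<tau>\<^sub>2 permutes {1..m}"
  shows "(\<Prod>j\<in>{1..n+m}. A j ((block_perm n m \<tau>\<^sub>1 \<tau>\<^sub>2 \<circ> inv (split_perm n m I)) j))
    = (\<Prod>j\<in>{1..n}. A (idx I j) (\<tau>\<^sub>1 j))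
      * (\<Prod>j\<in>{1..m}. A (idx ({1..n+m} - I) j) (n + \<tau>\<^sub>2 j))"
proof -
  let ?b = "block_perm n m \<tau>\<^sub>1 \<tau>\<^sub>2" and ?p = "split_perm n m I"
  have p: "?p permutes {1..n+m}" by (rule split_perm_permutes[OF I])
  have "(\<Prod>j\<in>{1..n+m}. A j ((?b \<circ> inv ?p) j)) = (\<Prod>i\<in>{1..n+m}. A (?p i) (?b i))"
    using prod.reindex_bij_betw[OF permutes_imp_bij[OF p], of "\<lambda>j. A j ((?b \<circ> inv ?p) j)"]
    by (simp add: permutes_inverses(2)[OF p])
  also have "\<dots> = (\<Prod>i\<in>{1..n}. A (?p i) (?b i)) * (\<Prod>j\<in>{1..m}. A (?p (n + j)) (?b (n + j)))"
  proof -
    have "{1..n+m} = {1..n} \<union> (+) n ` {1..m}" by (auto simp: image_iff)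
    then show ?thesis
      by (simp only:) (subst prod.union_disjoint, auto simp: prod.reindex simp del: image_add_atLeastAtMost)
  qed
  also have "\<dots> = (\<Prod>j\<in>{1..n}. A (idx I j) (\<tau>\<^sub>1 j))
      * (\<Prod>j\<in>{1..m}. A (idx ({1..n+m} - I) j) (n + \<tau>\<^sub>2 j))"
    using \<tau> by (simp add: split_perm_low split_perm_high block_perm_low block_perm_high)
  finally show ?thesis .
qed

lemma sign_block_perm_split_perm:
  assumes I: "I \<subseteq> {1..n+m}" "card I = n"
    and \<tau>: "\<tau>\<^sub>1 permutes {1..n}" "\<tau>\<^sub>2 permutes {1..m}"
  shows "sign (block_perm n m \<tau>\<^sub>1 \<tau>\<^sub>2 \<circ> inv (split_perm n m I))
    = sign (split_perm n m I) * sign \<tau>\<^sub>1 * sign \<tau>\<^sub>2"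
proof -
  have "permutation (split_perm n m I)" "permutation (block_perm n m \<tau>\<^sub>1 \<tau>\<^sub>2)"
    by (rule permutes_imp_permutation[OF finite_atLeastAtMost split_perm_permutes[OF I]],
        rule permutes_imp_permutation[OF finite_atLeastAtMost block_perm_permutes[OF \<tau>]])
  then show ?thesis
    by (simp add: sign_compose permutation_inverse sign_inverse sign_block_perm[OF \<tau>])
qed

lemma sum_block_perm_leibniz:
  fixes A :: "nat \<Rightarrow> nat \<Rightarrow> 'a::comm_ring_1"
  assumes I: "I \<subseteq> {1..n+m}" "card I = n"
  defines "\<sigma> \<equiv> \<lambda>\<tau>\<^sub>1 \<tau>\<^sub>2. block_perm n m \<tau>\<^sub>1 \<tau>\<^sub>2 \<circ> inv (split_perm n m I)"
  shows "(\<Sum>\<tau>\<^sub>1 | \<tau>\<^sub>1 permutes {1..n}. \<Sum>\<tau>\<^sub>2 | \<tau>\<^sub>2 permutes {1..m}.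
        of_int (sign (\<sigma> \<tau>\<^sub>1 \<tau>\<^sub>2)) * (\<Prod>j\<in>{1..n+m}. A j (\<sigma> \<tau>\<^sub>1 \<tau>\<^sub>2 j)))
    = of_int (sign (split_perm n m I))
      * (detn n (\<lambda>j k. A (idx I j) k) * detn m (\<lambda>j k. A (idx ({1..n+m} - I) j) (n + k)))"
proof -
  let ?II = "{1..n+m} - I"
  have "of_int (sign (split_perm n m I))
      * (detn n (\<lambda>j k. A (idx I j) k) * detn m (\<lambda>j k. A (idx ?II j) (n + k)))
    = (\<Sum>\<tau>\<^sub>1 | \<tau>\<^sub>1 permutes {1..n}. \<Sum>\<tau>\<^sub>2 | \<tau>\<^sub>2 permutes {1..m}.
      of_int (sign (split_perm n m I))
      * ((of_int (sign \<tau>\<^sub>1) * (\<Prod>j\<in>{1..n}. A (idx I j) (\<tau>\<^sub>1 j)))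
      * (of_int (sign \<tau>\<^sub>2) * (\<Prod>j\<in>{1..m}. A (idx ?II j) (n + \<tau>\<^sub>2 j)))))"
    unfolding detn_def sum_product by (simp only: sum_distrib_left)
  also have "\<dots> = (\<Sum>\<tau>\<^sub>1 | \<tau>\<^sub>1 permutes {1..n}. \<Sum>\<tau>\<^sub>2 | \<tau>\<^sub>2 permutes {1..m}.
      of_int (sign (\<sigma> \<tau>\<^sub>1 \<tau>\<^sub>2)) * (\<Prod>j\<in>{1..n+m}. A j (\<sigma> \<tau>\<^sub>1 \<tau>\<^sub>2 j)))"
    using sign_block_perm_split_perm[OF I] prod_block_perm_split_perm[OF I, where A = A]
    by (intro sum.cong refl) (simp add: \<sigma>_def ac_simps)
  finally show ?thesis by (rule sym)
qed

lemma detn_laplace: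
  fixes A :: "nat \<Rightarrow> nat \<Rightarrow> 'a::comm_ring_1"
  shows "detn (n + m) A = (\<Sum>I | I \<subseteq> {1..n+m} \<and> card I = n.
    of_int (sign (split_perm n m I)) * detn n (\<lambda>j k. A (idx I j) k)
      * detn m (\<lambda>j k. A (idx ({1..n+m} - I) j) (n + k)))"
  unfolding detn_def[of "n + m" A] sum_permutes_split sum_block_perm mult.assoc
  by (rule sum.cong[OF refl], rule sum_block_perm_leibniz) auto

lemma Delta_split_perm:
  assumes I: "I \<subseteq> {1..n+m}" "card I = n"
  defines "II \<equiv> {1..n+m} - I"
  shows "of_int (sign (split_perm n m I)) * Delta c (n + m) \<beta>
    = Delta c n (\<lambda>j. \<beta> (idx I j)) * Delta c m (\<lambda>j. \<beta> (idx II j)) * gset c \<beta> II I"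
proof -
  let ?p = "split_perm n m I"
  have low: "bij_betw ?p {1..n} I" and high: "bij_betw (?p \<circ> (+) n) {1..m} II"
    using bij_betw_split_perm[OF I] bij_betw_trans[OF bij_betw_add_interval] by (auto simp: II_def)
  have "of_int (sign ?p) * Delta c (n + m) \<beta> = Delta c (n + m) (\<beta> \<circ> ?p)"
    by (rule Delta_permute[OF split_perm_permutes[OF I], symmetric])
  also have "\<dots> = Delta c n (\<beta> \<circ> ?p) * Delta c m (\<lambda>j. \<beta> (?p (n + j)))
      * (\<Prod>j\<in>{1..m}. \<Prod>k\<in>{1..n}. gfun c (\<beta> (?p (n + j))) (\<beta> (?p k)))"
    by (simp add: Delta_add)
  also have "Delta c n (\<beta> \<circ> ?p) = Delta c n (\<lambda>j. \<beta> (idx I j))"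
    by (rule Delta_cong) (simp add: split_perm_low)
  also have "Delta c m (\<lambda>j. \<beta> (?p (n + j))) = Delta c m (\<lambda>j. \<beta> (idx II j))"
    by (rule Delta_cong) (simp add: split_perm_high II_def)
  also have "(\<Prod>j\<in>{1..m}. \<Prod>k\<in>{1..n}. gfun c (\<beta> (?p (n + j))) (\<beta> (?p k))) = gset c \<beta> II I"
    unfolding gset_def
    using prod.reindex_bij_betw[OF high, of "\<lambda>u. \<Prod>v\<in>I. gfun c (\<beta> u) (\<beta> v)"]
      prod.reindex_bij_betw[OF low, of "\<lambda>v. gfun c (\<beta> _) (\<beta> v)"]
    by simp
  finally show ?thesis .
qed

theorem lemmaC2:
  fixes c :: "'a::field" and n m :: nat
    and \<phi> :: "nat \<Rightarrow> 'a \<Rightarrow> 'a" and \<beta> :: "nat \<Rightarrow> 'a"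
  assumes "c \<noteq> 0"
  shows "Phi c (n + m) \<phi> \<beta> =
    (\<Sum>I | I \<subseteq> {1..n+m} \<and> card I = n.
       let II = {1..n+m} - I in
       Delta c n (\<lambda>j. \<beta> (idx I j)) * detn n (\<lambda>j k. \<phi> k (\<beta> (idx I j)))
     * (Delta c m (\<lambda>j. \<beta> (idx II j)) * detn m (\<lambda>j k. \<phi> (n + k) (\<beta> (idx II j))))
     * gset c \<beta> II I)"
proof -
  have expand: "Phi c (n + m) \<phi> \<beta> = (\<Sum>I | I \<subseteq> {1..n+m} \<and> card I = n.
      (of_int (sign (split_perm n m I)) * Delta c (n + m) \<beta>)
      * detn n (\<lambda>j k. \<phi> k (\<beta> (idx I j)))
      * detn m (\<lambda>j k. \<phi> (n + k) (\<beta> (idx ({1..n+m} - I) j))))"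
    unfolding Phi_def detn_laplace[of n m] sum_distrib_left by (simp only: ac_simps)
  show ?thesis
    unfolding expand
    by (rule sum.cong[OF refl], subst Delta_split_perm) (auto simp: Let_def ac_simps)
qed

end
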